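(* Let $\mathcal{E}$ be a collection of environments, where each environment $e\in\mathcal{E}$ has a joint density $p_e(x,y)$ of a feature vector $x=(x^{(1)},\dots,x^{(p)})$ and an outcome $y$. Assume invariance: there exists $z^*\in\{0,1\}^p$ such that the conditional density $p_e(y\mid x^{z^*})$ is the same for all $e\in\mathcal{E}$. Assume moreover that such a $z^*$ is unique. Then, for $z\in\{0,1\}^p$, the equality $$g(y\mid x^z)=p_e(y\mid x^z)\quad\text{for all } e\in\mathcal{E}$$ holds if and only if $z=z^*$.
   Context: For a feature selector $z\in\{0,1\}^p$, $x^z$ denotes the subvector of $x$ consisting of the coordinates $x^{(j)}$ with $z^{(j)}=1$, and $x^{-z}$ the subvector of the remaining coordinates. The local marginal $p_e(x^z)$ and local conditional $p_e(y\mid x^z)$ are derived from the joint $p_e(x,y)$. The pooled conditional is defined by $$g(y\mid x^z):=\frac{\sum_{e\in\mathcal{E}}\int p_e(x,y)\,\mathrm{d}x^{-z}}{\sum_{e\in\mathcal{E}}p_e(x^z)}.$$ *)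

theory Defs
  imports "HOL-Analysis.Analysis"
begin

text \<open>Feature vectors are x :: 'n \<Rightarrow> real (index type 'n finite, p = CARD('n));
  a feature selector z \<in> {0,1}^p is represented by the set z :: 'n set of selected
  coordinates. Functions of x^z are functions of x that only read the coordinates in z.\<close>

definition fill :: "'n set \<Rightarrow> ('n \<Rightarrow> real) \<Rightarrow> ('n \<Rightarrow> real) \<Rightarrow> ('n \<Rightarrow> real)" where
  "fill z x t = (\<lambda>i. if i \<in> z then x i else t i)"

definition local_joint :: "('e \<Rightarrow> ('n \<Rightarrow> real) \<Rightarrow> real \<Rightarrow> real) \<Rightarrow> 'e \<Rightarrow> 'n set
    \<Rightarrow> ('n \<Rightarrow> real) \<Rightarrow> real \<Rightarrow> real" where
  "local_joint p e z x y =
     (\<integral>t. p e (fill z x t) y \<partial>(PiM (UNIV - z) (\<lambda>_. lborel)))"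

definition local_marginal :: "('e \<Rightarrow> ('n \<Rightarrow> real) \<Rightarrow> real \<Rightarrow> real) \<Rightarrow> 'e \<Rightarrow> 'n set
    \<Rightarrow> ('n \<Rightarrow> real) \<Rightarrow> real" where
  "local_marginal p e z x = (\<integral>y. local_joint p e z x y \<partial>lborel)"

definition local_cond :: "('e \<Rightarrow> ('n \<Rightarrow> real) \<Rightarrow> real \<Rightarrow> real) \<Rightarrow> 'e \<Rightarrow> 'n set
    \<Rightarrow> ('n \<Rightarrow> real) \<Rightarrow> real \<Rightarrow> real" where
  "local_cond p e z x y = local_joint p e z x y / local_marginal p e z x"

definition pooled_cond :: "'e set \<Rightarrow> ('e \<Rightarrow> ('n \<Rightarrow> real) \<Rightarrow> real \<Rightarrow> real) \<Rightarrow> 'n set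
    \<Rightarrow> ('n \<Rightarrow> real) \<Rightarrow> real \<Rightarrow> real" where
  "pooled_cond E p z x y =
     (\<Sum>e\<in>E. local_joint p e z x y) / (\<Sum>e\<in>E. local_marginal p e z x)"

definition invariant :: "'e set \<Rightarrow> ('e \<Rightarrow> ('n \<Rightarrow> real) \<Rightarrow> real \<Rightarrow> real) \<Rightarrow> 'n set \<Rightarrow> bool" where
  "invariant E p z \<longleftrightarrow>
     (\<forall>e\<in>E. \<forall>e'\<in>E. \<forall>x y. local_cond p e z x y = local_cond p e' z x y)"

definition is_joint_density :: "(('n::finite \<Rightarrow> real) \<Rightarrow> real \<Rightarrow> real) \<Rightarrow> bool" where
  "is_joint_density f \<longleftrightarrow>
     (\<forall>x y. 0 \<le> f x y) \<and>
     integrable (PiM UNIV (\<lambda>_::'n. lborel) \<Otimes>\<^sub>M lborel) (\<lambda>(x, y). f x y) \<and>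
     (\<integral>(x, y). f x y \<partial>(PiM UNIV (\<lambda>_::'n. lborel) \<Otimes>\<^sub>M lborel)) = 1"

end

theory Submission
  imports Defs
begin

text \<open>If z is invariant, then for each x either every environment has zero marginal at x or
  none has. In the first case both sides vanish because of division by zero; in the second
  p_e(x^z, y) = c p_e(x^z) for all e with the common conditional c, and summing over the
  environments shows that pooling returns the same ratio c. Conversely, if the pooled
  conditional agrees with every local one, then z is invariant, and uniqueness forces z = z*.\<close>

lemma sum_divide_sum_eq_common_ratio:
  fixes j m :: "'a \<Rightarrow> 'b::field"
  assumes "\<And>e. e \<in> E \<Longrightarrow> j e = c * m e" and "(\<Sum>e\<in>E. m e) \<noteq> 0"
  shows "(\<Sum>e\<in>E. j e) / (\<Sum>e\<in>E. m e) = c"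
  using assms by (simp add: sum_distrib_left[symmetric])

lemma local_marginal_nonneg:
  assumes "\<And>x y. 0 \<le> p e x y"
  shows "0 \<le> local_marginal p e z x"
  using assms unfolding local_marginal_def local_joint_def
  by (simp add: integral_nonneg_AE)

lemma local_marginal_eq_0_if_invariant:
  assumes "invariant E p z" and "e \<in> E" and "e' \<in> E"
    and "local_marginal p e' z x = 0"
  shows "local_marginal p e z x = 0"
proof (rule ccontr)
  assume nonzero: "local_marginal p e z x \<noteq> 0"
  \<comment> \<open>division by the zero marginal makes the conditional of e' vanish at x, hence also that of e\<close>
  have "local_cond p e z x y = 0" for y
    using assms unfolding invariant_def local_cond_def by (metis div_by_0)
  then have "local_joint p e z x = (\<lambda>y. 0)"
    using nonzero unfolding local_cond_def by auto
  then show False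
    using nonzero unfolding local_marginal_def by simp
qed

lemma pooled_cond_eq_local_cond_if_invariant:
  assumes "finite E" and "\<And>e x y. e \<in> E \<Longrightarrow> 0 \<le> p e x y"
    and "invariant E p z" and "e \<in> E"
  shows "pooled_cond E p z x y = local_cond p e z x y"
proof (cases "\<exists>e0\<in>E. local_marginal p e0 z x \<noteq> 0")
  case True
  then obtain e0 where e0: "e0 \<in> E" "local_marginal p e0 z x \<noteq> 0" by blast
  have marginal_nonzero: "local_marginal p e' z x \<noteq> 0" if "e' \<in> E" for e'
    using local_marginal_eq_0_if_invariant[OF assms(3) e0(1) that] e0(2) by blast
  have joint_eq: "local_joint p e' z x y = local_cond p e z x y * local_marginal p e' z x"
    if "e' \<in> E" for e'
    using assms(3) that \<open>e \<in> E\<close> marginal_nonzero[OF that]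
    unfolding invariant_def local_cond_def by (metis nonzero_eq_divide_eq)
  have marginal_sum_pos: "(\<Sum>e'\<in>E. local_marginal p e' z x) > 0"
  proof (rule sum_pos2[OF assms(1) e0(1)])
    show "0 \<le> local_marginal p e' z x" if "e' \<in> E" for e'
      using assms(2)[OF that] by (rule local_marginal_nonneg)
    then show "0 < local_marginal p e0 z x"
      using e0 by (simp add: order_le_neq_trans)
  qed
  show ?thesis
    unfolding pooled_cond_def
    by (rule sum_divide_sum_eq_common_ratio[OF joint_eq]) (use marginal_sum_pos in simp_all)
next
  case False
  then show ?thesis
    using \<open>e \<in> E\<close> unfolding pooled_cond_def local_cond_def by simp
qed

theorem proposition1:
  fixes E :: "'e set"
    and p :: "'e \<Rightarrow> ('n::finite \<Rightarrow> real) \<Rightarrow> real \<Rightarrow> real"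
    and zstar :: "'n set"
  assumes "finite E"
    and "\<forall>e\<in>E. is_joint_density (p e)"
    and "invariant E p zstar"
    and "\<forall>z'. invariant E p z' \<longrightarrow> z' = zstar"
  shows "(\<forall>e\<in>E. \<forall>x y. pooled_cond E p z x y = local_cond p e z x y) \<longleftrightarrow> z = zstar"
proof
  assume "\<forall>e\<in>E. \<forall>x y. pooled_cond E p z x y = local_cond p e z x y"
  then have "invariant E p z"
    unfolding invariant_def by metis
  then show "z = zstar"
    using assms(4) by blast
next
  assume "z = zstar"
  have density_nonneg: "\<And>e x y. e \<in> E \<Longrightarrow> 0 \<le> p e x y"
    using assms(2) unfolding is_joint_density_def by blast
  show "\<forall>e\<in>E. \<forall>x y. pooled_cond E p z x y = local_cond p e z x y"
    using assms(3) \<open>z = zstar\<close>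
    by (intro ballI allI pooled_cond_eq_local_cond_if_invariant[OF assms(1) density_nonneg])
      simp_all
qed

end
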